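(* Let $\lambda\in F$ be an element whose reduced word in the dual generators is $\hat x_r^{\alpha_r}\cdots\hat x_1^{\alpha_1}$ ($\hat x_k\in\{\hat m_1,\ldots,\hat b_g\}$, $\alpha_k\in\{\pm1\}$), and whose reduced word in $m_i,a_j,b_j$ has the form $w\,z\,w'$, where $w,w'$ are reduced words in $m_i,a_j,b_j$ and $z\in\{m_1^{\pm1},\ldots,b_g^{\pm1}\}$ is a single letter. Write $P_j=h_{j-1}\cdots h_1m_n\cdots m_1$ and $P'_j=h_j\cdots h_1m_n\cdots m_1$. Then: (i) if $w'=m_i\cdots m_1$ and $\hat x_1^{\alpha_1}\neq\hat m_i^{-1}$, then $z\in\{m_{i+1}^{\pm1},\ldots,m_n^{\pm1},a_1^{\pm1},\ldots,b_g^{\pm1}\}$; (ii) if $w'=m_{i-1}\cdots m_1$ and $\hat x_1^{\alpha_1}\neq\hat m_i$, then $z\in\{m_1^{\pm1},\ldots,m_{i-1}^{\pm1},m_i\}$; (iii) if $w'=P_j$ and $\hat x_1^{\alpha_1}\neq\hat a_j$, then $z\in\{m_1^{\pm1},\ldots,b_{j-1}^{\pm1},a_j\}$; (iv) if $w'=a_jP_j$ and $\hat x_1^{\alpha_1}\neq\hat a_j$, then $z\in\{b_j^{-1},a_{j+1}^{\pm1},\ldots,b_g^{\pm1}\}$; (v) if $w'=a_j^{-1}b_j^{-1}a_jP_j$ and $\hat x_1^{\alpha_1}\neq\hat a_j^{-1}$, then $z\in\{a_j^{-1},b_j^{\pm1},a_{j+1}^{\pm1},\ldots,b_g^{\pm1}\}$;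 (vi) if $w'=b_j^{-1}a_jP_j$ and $\hat x_1^{\alpha_1}\neq\hat a_j^{-1}$, then $z\in\{m_1^{\pm1},\ldots,b_{j-1}^{\pm1},a_j^{\pm1}\}$; (vii) if $w'=b_j^{-1}a_jP_j$ and $\hat x_1^{\alpha_1}\neq\hat b_j$, then $z\in\{a_j^{-1},b_j^{-1},a_{j+1}^{\pm1},\ldots,b_g^{\pm1}\}$; (viii) if $w'=a_jP_j$ and $\hat x_1^{\alpha_1}\neq\hat b_j$, then $z\in\{m_1^{\pm1},\ldots,b_{j-1}^{\pm1},a_j,b_j^{\pm1}\}$; (ix) if $w'=a_j^{-1}b_j^{-1}a_jP_j$ and $\hat x_1^{\alpha_1}\neq\hat b_j^{-1}$, then $z\in\{m_1^{\pm1},\ldots,b_{j-1}^{\pm1},b_j\}$; (x) if $w'=P'_j$ and $\hat x_1^{\alpha_1}\neq\hat b_j^{-1}$, then $z\in\{a_{j+1}^{\pm1},\ldots,b_g^{\pm1}\}$. Here a set such as $\{m_1^{\pm1},\ldots,b_{j-1}^{\pm1}\}$ denotes all letters $m_1^{\pm1},\ldots,m_n^{\pm1},a_1^{\pm1},b_1^{\pm1},\ldots,a_{j-1}^{\pm1},b_{j-1}^{\pm1}$, listed in the order $m_1,\ldots,m_n,a_1,b_1,\ldots,a_g,b_g$.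
   Context: $F$ is the free group on $m_1,\ldots,m_n,a_1,b_1,\ldots,a_g,b_g$ (the fundamental group of a genus $g$ surface with $n$ punctures and a disc removed). Words are composed right to left. $h_j=b_ja_j^{-1}b_j^{-1}a_j$. The dual generators are $\hat m_i=m_1^{-1}\cdots m_{i-1}^{-1}m_i^{-1}m_{i-1}\cdots m_1$, $\hat a_j=m_1^{-1}\cdots m_n^{-1}h_1^{-1}\cdots h_j^{-1}b_jh_{j-1}\cdots h_1m_n\cdots m_1$, $\hat b_j=m_1^{-1}\cdots m_n^{-1}h_1^{-1}\cdots h_j^{-1}a_jh_{j-1}\cdots h_1m_n\cdots m_1$; they also freely generate $F$. *)

theory Defs
  imports Main
begin

text \<open>Elements are represented by
  reduced words.  A word is a list of letters written left to right exactly as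
  in the paper (so x_r ... x_1 is the list [x_r, ..., x_1]); a letter is a
  generator together with an exponent sign (True = +1, False = -1).\<close>

datatype gen = Mg nat | Ag nat | Bg nat

type_synonym letter = "gen \<times> bool"

definition inv_letter :: "'x \<times> bool \<Rightarrow> 'x \<times> bool" where
  "inv_letter l = (fst l, \<not> snd l)"

definition inv_word :: "('x \<times> bool) list \<Rightarrow> ('x \<times> bool) list" where
  "inv_word ws = rev (map inv_letter ws)"

definition reduced :: "('x \<times> bool) list \<Rightarrow> bool" where
  "reduced ws \<longleftrightarrow> (\<forall>k. Suc k < length ws \<longrightarrow> ws ! Suc k \<noteq> inv_letter (ws ! k))"

fun red_step :: "'x \<times> bool \<Rightarrow> ('x \<times> bool) list \<Rightarrow> ('x \<times> bool) list" where
  "red_step x [] = [x]"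
| "red_step x (y # ys) = (if y = inv_letter x then ys else x # y # ys)"

definition reduce :: "('x \<times> bool) list \<Rightarrow> ('x \<times> bool) list" where
  "reduce ws = foldr red_step ws []"

definition valid_gen :: "nat \<Rightarrow> nat \<Rightarrow> gen \<Rightarrow> bool" where
  "valid_gen n g x = (case x of Mg i \<Rightarrow> 1 \<le> i \<and> i \<le> n
                               | Ag j \<Rightarrow> 1 \<le> j \<and> j \<le> g
                               | Bg j \<Rightarrow> 1 \<le> j \<and> j \<le> g)"

definition mseq :: "nat \<Rightarrow> letter list" where
  "mseq i = rev (map (\<lambda>k. (Mg k, True)) [1..<Suc i])"

definition hword :: "nat \<Rightarrow> letter list" where
  "hword j = [(Bg j, True), (Ag j, False), (Bg j, False), (Ag j, True)]"

definition Pw :: "nat \<Rightarrow> nat \<Rightarrow> letter list" where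
  "Pw n j = concat (map hword (rev [1..<j])) @ mseq n"

definition P'w :: "nat \<Rightarrow> nat \<Rightarrow> letter list" where
  "P'w n j = concat (map hword (rev [1..<Suc j])) @ mseq n"

text \<open>Dual generators, as words in m_i, a_j, b_j.\<close>
fun hat_word :: "nat \<Rightarrow> gen \<Rightarrow> letter list" where
  "hat_word n (Mg i) = inv_word (mseq (i - 1)) @ [(Mg i, False)] @ mseq (i - 1)"
| "hat_word n (Ag j) = inv_word (P'w n j) @ [(Bg j, True)] @ Pw n j"
| "hat_word n (Bg j) = inv_word (P'w n j) @ [(Ag j, True)] @ Pw n j"

definition dual_exp :: "nat \<Rightarrow> letter \<Rightarrow> letter list" where
  "dual_exp n l = (if snd l then hat_word n (fst l) else inv_word (hat_word n (fst l)))"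

text \<open>The element of F represented by a word in the dual generators
  (as its reduced word in m_i, a_j, b_j).\<close>
definition dual_eval :: "nat \<Rightarrow> letter list \<Rightarrow> letter list" where
  "dual_eval n du = reduce (concat (map (dual_exp n) du))"

definition pm :: "gen set \<Rightarrow> letter set" where
  "pm S = {l. fst l \<in> S}"

definition Ms :: "nat \<Rightarrow> nat \<Rightarrow> gen set" where
  "Ms lo hi = {Mg k | k. lo \<le> k \<and> k \<le> hi}"

definition ABs :: "nat \<Rightarrow> nat \<Rightarrow> gen set" where
  "ABs lo hi = {Ag k | k. lo \<le> k \<and> k \<le> hi} \<union> {Bg k | k. lo \<le> k \<and> k \<le> hi}"

end

theory Submission
  imports Defs
begin

text \<open>
  Read the word \<open>\<dots> h\<^sub>2 h\<^sub>1 m\<^sub>n \<dots> m\<^sub>1\<close> from the right as the \<^emph>\<open>spine\<close>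
  \<open>d\<^sub>1, d\<^sub>2, \<dots>\<close> (so \<open>d\<^sub>k = m\<^sub>k\<close> for \<open>k \<le> n\<close>, followed by
  \<open>a\<^sub>j, b\<^sub>j\<^sup>-\<^sup>1, a\<^sub>j\<^sup>-\<^sup>1, b\<^sub>j\<close> for each \<open>h\<^sub>j\<close>) and put \<open>S\<^sub>t = d\<^sub>t \<dots> d\<^sub>1\<close>.
  Every \<open>w'\<close> of the statement is some \<open>S\<^sub>t\<close>, and every dual letter is a conjugate
  \<open>S\<^sub>p\<^sup>-\<^sup>1 c S\<^sub>p\<close> of a core \<open>c\<close> of length at most five.
  A reduced word that is not a spine suffix factors uniquely as \<open>v z S\<^sub>s\<close> with
  \<open>z \<noteq> d\<^sub>s\<^sub>+\<^sub>1\<close>. Order the letters as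
  \<open>m\<^sub>1 < m\<^sub>1\<^sup>-\<^sup>1 < \<dots> < m\<^sub>n\<^sup>-\<^sup>1 < a\<^sub>1 < b\<^sub>1 < a\<^sub>1\<^sup>-\<^sup>1 < b\<^sub>1\<^sup>-\<^sup>1 < a\<^sub>2 < \<dots>\<close>.
  By induction along the dual word, the side on which \<open>z\<close> deviates from the spine determines
  the last dual letter \<open>x\<close>: if \<open>z < d\<^sub>s\<^sub>+\<^sub>1\<close> then \<open>x\<close> is \<open>d\<^sub>s\<close> with
  \<open>m\<close>- and \<open>b\<close>-letters inverted, and if \<open>z > d\<^sub>s\<^sub>+\<^sub>1\<close> then \<open>x\<close> is
  \<open>d\<^sub>s\<^sub>+\<^sub>1\<close> with \<open>b\<close>-letters inverted. Multiplying by a dual letter only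
  changes the word near the block of its core, so the induction step is a finite case analysis of
  the position \<open>s\<close> relative to \<open>p\<close>. Each of the ten claims is this invariant read
  at the position \<open>t\<close> with \<open>w' = S\<^sub>t\<close>.
\<close>

section \<open>Free reduction\<close>

lemma inv_letter_inv [simp]: "inv_letter (inv_letter x) = x"
  by (simp add: inv_letter_def)

lemma inv_letter_eq_iff [simp]: "inv_letter x = inv_letter y \<longleftrightarrow> x = y"
  by (metis inv_letter_inv)

lemma inv_letter_neq [simp]: "inv_letter x \<noteq> x" "x \<noteq> inv_letter x"
  by (simp_all add: inv_letter_def prod_eq_iff)

lemma inv_word_Nil [simp]: "inv_word [] = []"
  by (simp add: inv_word_def)

lemma inv_word_eq_Nil_iff [simp]: "inv_word xs = [] \<longleftrightarrow> xs = []"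
  by (simp add: inv_word_def)

lemma inv_word_Cons [simp]: "inv_word (x # xs) = inv_word xs @ [inv_letter x]"
  by (simp add: inv_word_def)

lemma inv_word_append [simp]: "inv_word (xs @ ys) = inv_word ys @ inv_word xs"
  by (simp add: inv_word_def)

lemma inv_word_inv_word [simp]: "inv_word (inv_word xs) = xs"
  by (simp add: inv_word_def rev_map comp_def)

lemma fst_inv_letter [simp]: "fst (inv_letter l) = fst l"
  by (simp add: inv_letter_def)

lemma set_inv_word: "set (inv_word w) = inv_letter ` set w"
  by (simp add: inv_word_def)

lemma hd_inv_word: "xs \<noteq> [] \<Longrightarrow> hd (inv_word xs) = inv_letter (last xs)"
  by (simp add: inv_word_def hd_rev last_map)

lemma last_inv_word: "xs \<noteq> [] \<Longrightarrow> last (inv_word xs) = inv_letter (hd xs)"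
  by (simp add: inv_word_def last_rev hd_map)

lemma reduced_Nil [simp]: "reduced []"
  by (simp add: reduced_def)

lemma reduced_singleton [simp]: "reduced [x]"
  by (simp add: reduced_def)

lemma reduced_Cons_Cons [simp]:
  "reduced (x # y # ys) \<longleftrightarrow> y \<noteq> inv_letter x \<and> reduced (y # ys)"
proof -
  have "reduced (x # y # ys) \<longleftrightarrow>
      y \<noteq> inv_letter x \<and> (\<forall>k. Suc k < length (y # ys) \<longrightarrow> (y # ys) ! Suc k \<noteq> inv_letter ((y # ys) ! k))"
    unfolding reduced_def by (auto simp: less_Suc_eq_0_disj)
  then show ?thesis by (simp add: reduced_def)
qed

lemma reduced_append:
  "reduced (xs @ ys) \<longleftrightarrow> reduced xs \<and> reduced ys \<and>
     (xs \<noteq> [] \<longrightarrow> ys \<noteq> [] \<longrightarrow> hd ys \<noteq> inv_letter (last xs))"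
proof (induction xs rule: induct_list012)
  case (3 x y zs)
  then show ?case by auto
qed (cases ys; auto)+

lemma reduced_prefix: "reduced (xs @ ys) \<Longrightarrow> reduced xs"
  by (simp add: reduced_append)

lemma reduced_Cons: "reduced (x # ys) \<longleftrightarrow> reduced ys \<and> (ys \<noteq> [] \<longrightarrow> hd ys \<noteq> inv_letter x)"
  using reduced_append[of "[x]" ys] by simp

lemma reduced_inv_word: "reduced xs \<Longrightarrow> reduced (inv_word xs)"
proof (induction xs)
  case (Cons x xs)
  then show ?case
    by (cases xs) (auto simp: reduced_append reduced_Cons last_inv_word inv_letter_def)
qed simp

lemma red_step_reduced: "reduced r \<Longrightarrow> reduced (red_step x r)"
  by (cases r) (auto simp: reduced_Cons)

lemma reduced_foldr_red_step: "reduced r \<Longrightarrow> reduced (foldr red_step a r)"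
  by (induction a) (auto intro: red_step_reduced)

lemma reduced_reduce [simp]: "reduced (reduce w)"
  by (simp add: reduce_def reduced_foldr_red_step)

lemma reduce_Nil [simp]: "reduce [] = []"
  by (simp add: reduce_def)

lemma reduce_Cons: "reduce (x # xs) = red_step x (reduce xs)"
  by (simp add: reduce_def)

lemma reduce_reduced: "reduced w \<Longrightarrow> reduce w = w"
proof (induction w)
  case (Cons x w)
  then show ?case by (cases w) (auto simp: reduce_Cons reduced_Cons)
qed simp

lemma red_step_inv_cancel: "reduced r \<Longrightarrow> red_step x (red_step (inv_letter x) r) = r"
proof (cases r)
  case (Cons y ys)
  then show "reduced r \<Longrightarrow> ?thesis" by (cases ys) (auto simp: reduced_Cons)
qed simp

lemma foldr_red_step_reduce: "reduced r \<Longrightarrow> foldr red_step (reduce a) r = foldr red_step a r"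
proof (induction a)
  case (Cons x a)
  have "foldr red_step (red_step x (reduce a)) r = red_step x (foldr red_step (reduce a) r)"
  proof (cases "reduce a")
    case (Cons y b)
    have "reduced (foldr red_step b r)" using Cons.prems by (rule reduced_foldr_red_step)
    then show ?thesis using Cons red_step_inv_cancel[of "foldr red_step b r" x] by auto
  qed simp
  then show ?case using Cons by (simp add: reduce_Cons)
qed (simp add: reduce_def)

lemma reduce_append_reduce: "reduce (a @ reduce b @ c) = reduce (a @ b @ c)"
proof -
  have "reduce (a @ xs @ c) = foldr red_step a (foldr red_step xs (reduce c))" for xs
    by (simp add: reduce_def)
  then show ?thesis by (simp add: foldr_red_step_reduce)
qed

lemma reduce_append_inv_word: "reduce (a @ m @ inv_word m @ b) = reduce (a @ b)"
proof -
  have "foldr red_step m (foldr red_step (inv_word m) r) = r" if "reduced r" for r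
    using that
  proof (induction m arbitrary: r)
    case (Cons x m)
    then show ?case by (simp add: red_step_inv_cancel red_step_reduced)
  qed simp
  then show ?thesis by (simp add: reduce_def reduced_foldr_red_step)
qed

lemma set_reduce_subset: "set (reduce w) \<subseteq> set w"
proof -
  have "set (foldr red_step w r) \<subseteq> set w \<union> set r" for r
  proof (induction w)
    case (Cons x w)
    have "set (red_step x q) \<subseteq> insert x (set q)" for q by (cases q) auto
    then show ?case using Cons by fastforce
  qed simp
  from this[of "[]"] show ?thesis by (simp add: reduce_def)
qed

section \<open>The spine\<close>

text \<open>\<open>spine_letter n k\<close> is \<open>d\<^sub>k\<close>; \<open>spine_seg n a b\<close> is \<open>d\<^sub>b \<dots> d\<^sub>a\<^sub>+\<^sub>1\<close>.\<close>

definition spine_letter :: "nat \<Rightarrow> nat \<Rightarrow> letter" where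
  "spine_letter n k = (if k \<le> n then (Mg k, True)
     else rev (hword (Suc ((k - Suc n) div 4))) ! ((k - Suc n) mod 4))"

definition spine_seg :: "nat \<Rightarrow> nat \<Rightarrow> nat \<Rightarrow> letter list" where
  "spine_seg n a b = map (spine_letter n) (rev [Suc a..<Suc b])"

abbreviation spine :: "nat \<Rightarrow> nat \<Rightarrow> letter list" where
  "spine n t \<equiv> spine_seg n 0 t"

lemma spine_letter_Mg: "k \<le> n \<Longrightarrow> spine_letter n k = (Mg k, True)"
  by (simp add: spine_letter_def)

lemma spine_letter_hword: "r < 4 \<Longrightarrow> spine_letter n (Suc (n + 4*q + r)) = rev (hword (Suc q)) ! r"
  by (simp add: spine_letter_def)

lemma spine_letter_block:
  "spine_letter n (Suc (n + 4*q)) = (Ag (Suc q), True)"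
  "spine_letter n (Suc (Suc (n + 4*q))) = (Bg (Suc q), False)"
  "spine_letter n (Suc (Suc (Suc (n + 4*q)))) = (Ag (Suc q), False)"
  "spine_letter n (Suc (Suc (Suc (Suc (n + 4*q))))) = (Bg (Suc q), True)"
proof -
  have "Suc (Suc (n + 4*q)) = Suc (n + 4*q + 1)" "Suc (Suc (Suc (n + 4*q))) = Suc (n + 4*q + 2)"
    "Suc (Suc (Suc (Suc (n + 4*q)))) = Suc (n + 4*q + 3)" by simp_all
  then show
    "spine_letter n (Suc (n + 4*q)) = (Ag (Suc q), True)"
    "spine_letter n (Suc (Suc (n + 4*q))) = (Bg (Suc q), False)"
    "spine_letter n (Suc (Suc (Suc (n + 4*q)))) = (Ag (Suc q), False)"
    "spine_letter n (Suc (Suc (Suc (Suc (n + 4*q))))) = (Bg (Suc q), True)"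
    using spine_letter_hword[of 0 n q] spine_letter_hword[of 1 n q]
      spine_letter_hword[of 2 n q] spine_letter_hword[of 3 n q]
    by (simp_all only:) (simp_all add: hword_def)
qed

lemma spine_letter_next_block:
  "spine_letter n (Suc (Suc (Suc (Suc (Suc (n + 4*q)))))) = (Ag (Suc (Suc q)), True)"
proof -
  have "Suc (Suc (Suc (Suc (n + 4*q)))) = n + 4 * Suc q" by simp
  then show ?thesis by (simp only: spine_letter_block(1))
qed

lemma spine_letter_block_start:
  "Suc 0 \<le> n + 4*q \<Longrightarrow>
    spine_letter n (n + 4*q) = (if q = 0 then (Mg n, True) else (Bg q, True))"
proof (cases q)
  case (Suc q')
  then have "n + 4*q = Suc (Suc (Suc (Suc (n + 4*q'))))" by simp
  then show ?thesis unfolding \<open>n + 4*q = _\<close> spine_letter_block(4) using Suc by simp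
qed (simp add: spine_letter_Mg)

lemma fst_spine_letter_Suc_neq:
  assumes "1 \<le> t" shows "fst (spine_letter n (Suc t)) \<noteq> fst (spine_letter n t)"
proof (cases "t < n")
  case True
  then show ?thesis by (simp add: spine_letter_Mg)
next
  case False
  define q r where "q = (t - n) div 4" and "r = (t - n) mod 4"
  have t: "t = n + 4*q + r" and r: "r < 4" using False by (simp_all add: q_def r_def)
  show ?thesis
  proof (cases r)
    case 0
    then show ?thesis
      using spine_letter_hword[OF r, of n q] spine_letter_block_start[of n q] assms
      unfolding t by (simp add: hword_def)
  next
    case (Suc r')
    then have t': "t = Suc (n + 4*q + r')" and "r' = 0 \<or> r' = 1 \<or> r' = 2" using t r by auto
    then show ?thesis
      using spine_letter_hword[OF r, of n q] spine_letter_hword[of r' n q] Suc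
      by (auto simp: hword_def)
  qed
qed

lemma spine_seg_self [simp]: "spine_seg n a a = []"
  by (simp add: spine_seg_def)

lemma spine_seg_Suc: "a \<le> b \<Longrightarrow> spine_seg n a (Suc b) = spine_letter n (Suc b) # spine_seg n a b"
  by (simp add: spine_seg_def)

lemma length_spine_seg [simp]: "length (spine_seg n a b) = b - a"
  by (simp add: spine_seg_def del: upt_Suc)

lemma spine_seg_append: "a \<le> b \<Longrightarrow> b \<le> c \<Longrightarrow> spine_seg n b c @ spine_seg n a b = spine_seg n a c"
proof -
  assume "a \<le> b" "b \<le> c"
  then have "[Suc a..<Suc c] = [Suc a..<Suc b] @ [Suc b..<Suc c]"
    using upt_add_eq_append[of "Suc a" "Suc b" "c - b"] by simp
  then show ?thesis by (simp add: spine_seg_def)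
qed

lemma hd_spine_seg: "a < b \<Longrightarrow> hd (spine_seg n a b) = spine_letter n b"
  by (simp add: spine_seg_def hd_map hd_rev)

lemma last_spine_seg: "a < b \<Longrightarrow> last (spine_seg n a b) = spine_letter n (Suc a)"
  by (simp add: spine_seg_def last_map last_rev hd_map upt_conv_Cons del: upt_Suc)

lemma spine_seg_Nil_iff [simp]: "spine_seg n a b = [] \<longleftrightarrow> b \<le> a"
  by (simp add: spine_seg_def)

lemma reduced_spine_seg: "reduced (spine_seg n a b)"
proof (induction b)
  case (Suc b)
  show ?case
  proof (cases "a < b")
    case True
    then have "fst (spine_letter n (Suc b)) \<noteq> fst (spine_letter n b)"
      by (intro fst_spine_letter_Suc_neq) simp
    then show ?thesis
      using Suc True by (auto simp: spine_seg_Suc reduced_Cons hd_spine_seg inv_letter_def)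
  next
    case False
    then show ?thesis by (cases "a = b") (simp_all add: spine_seg_Suc spine_seg_def)
  qed
qed (simp add: spine_seg_def)

lemma spine_seg_block: "spine_seg n (n + 4*q) (n + 4 * Suc q) = hword (Suc q)"
proof -
  have "n + 4 * Suc q = Suc (Suc (Suc (Suc (n + 4*q))))" by simp
  then show ?thesis unfolding \<open>n + 4 * Suc q = _\<close>
    by (simp add: spine_seg_Suc spine_letter_block hword_def)
qed

lemma mseq_eq_spine: "i \<le> n \<Longrightarrow> mseq i = spine n i"
  by (auto simp: mseq_def spine_seg_def rev_map spine_letter_Mg intro!: map_cong)

lemma Pw_eq_spine: "Pw n (Suc q) = spine n (n + 4*q)"
proof (induction q)
  case 0
  then show ?case by (simp add: Pw_def mseq_eq_spine)
next
  case (Suc q)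
  have "Pw n (Suc (Suc q)) = hword (Suc q) @ Pw n (Suc q)"
    by (simp add: Pw_def)
  also have "\<dots> = spine_seg n (n + 4*q) (n + 4 * Suc q) @ spine n (n + 4*q)"
    unfolding Suc spine_seg_block ..
  also have "\<dots> = spine n (n + 4 * Suc q)"
    by (simp add: spine_seg_append)
  finally show ?case .
qed

lemma P'w_eq_spine: "P'w n q = spine n (n + 4*q)"
  using Pw_eq_spine[of n q] by (simp add: Pw_def P'w_def)

lemma dual_exp_Mg:
  assumes "Suc k \<le> n"
  shows "dual_exp n (Mg (Suc k), True) = inv_word (spine n k) @ [(Mg (Suc k), False)] @ spine n k"
    and "dual_exp n (Mg (Suc k), False) = inv_word (spine n k) @ [(Mg (Suc k), True)] @ spine n k"
  using assms mseq_eq_spine[of k n] by (simp_all add: dual_exp_def inv_letter_def)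

lemma dual_exp_Ag_Bg:
  fixes n q :: nat defines "A \<equiv> Ag (Suc q)" and "B \<equiv> Bg (Suc q)" and "S \<equiv> spine n (n + 4*q)"
  shows "reduce (L @ dual_exp n (A, True)) =
      reduce (L @ inv_word S @ [(A, False), (B, True), (A, True)] @ S)"
    and "reduce (L @ dual_exp n (A, False)) =
      reduce (L @ inv_word S @ [(A, False), (B, False), (A, True)] @ S)"
    and "reduce (L @ dual_exp n (B, True)) =
      reduce (L @ inv_word S @ [(A, False), (B, True), (A, True), (B, False), (A, True)] @ S)"
    and "reduce (L @ dual_exp n (B, False)) =
      reduce (L @ inv_word S @ [(A, False), (B, True), (A, False), (B, False), (A, True)] @ S)"
proof -
  have P'w: "P'w n (Suc q) = hword (Suc q) @ S" and Pw: "Pw n (Suc q) = S"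
    by (simp_all add: P'w_def Pw_def S_def Pw_eq_spine[symmetric])
  have "L @ dual_exp n (A, True) =
      (L @ inv_word S @ [(A, False), (B, True), (A, True)]) @ [(B, False)] @ inv_word [(B, False)] @ S"
    and "L @ dual_exp n (A, False) =
      (L @ inv_word S) @ [(B, False)] @ inv_word [(B, False)] @ [(A, False), (B, False), (A, True)] @ S"
    by (simp_all add: dual_exp_def P'w Pw hword_def inv_letter_def A_def B_def)
  then show "reduce (L @ dual_exp n (A, True)) =
      reduce (L @ inv_word S @ [(A, False), (B, True), (A, True)] @ S)"
    and "reduce (L @ dual_exp n (A, False)) =
      reduce (L @ inv_word S @ [(A, False), (B, False), (A, True)] @ S)"
    by (simp_all only: reduce_append_inv_word) simp_all
  show "reduce (L @ dual_exp n (B, True)) =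
      reduce (L @ inv_word S @ [(A, False), (B, True), (A, True), (B, False), (A, True)] @ S)"
    and "reduce (L @ dual_exp n (B, False)) =
      reduce (L @ inv_word S @ [(A, False), (B, True), (A, False), (B, False), (A, True)] @ S)"
    by (simp_all add: dual_exp_def P'w Pw hword_def inv_letter_def A_def B_def)
qed

section \<open>The deviation invariant\<close>

definition rank :: "nat \<Rightarrow> letter \<Rightarrow> nat" where
  "rank n l = (case l of
       (Mg k, b) \<Rightarrow> 2*k - 2 + (if b then 0 else 1)
     | (Ag j, b) \<Rightarrow> 2*n + 4*j - 4 + (if b then 0 else 2)
     | (Bg j, b) \<Rightarrow> 2*n + 4*j - 4 + (if b then 1 else 3))"

lemma rank_simps [simp]:
  "rank n (Mg k, b) = 2*k - 2 + (if b then 0 else 1)"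
  "rank n (Ag j, b) = 2*n + 4*j - 4 + (if b then 0 else 2)"
  "rank n (Bg j, b) = 2*n + 4*j - 4 + (if b then 1 else 3)"
  by (simp_all add: rank_def)

definition flip_b :: "letter \<Rightarrow> letter" where
  "flip_b l = (case fst l of Bg j \<Rightarrow> inv_letter l | _ \<Rightarrow> l)"

definition flip_mb :: "letter \<Rightarrow> letter" where
  "flip_mb l = (case fst l of Ag j \<Rightarrow> l | _ \<Rightarrow> inv_letter l)"

text \<open>\<open>deviation_ok n s z x\<close> is the invariant for a word \<open>v z S\<^sub>s\<close> whose last dual
  letter is \<open>x\<close>.\<close>

definition deviation_ok :: "nat \<Rightarrow> nat \<Rightarrow> letter \<Rightarrow> letter \<Rightarrow> bool" where
  "deviation_ok n s z x \<longleftrightarrow>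
     rank n z \<noteq> rank n (spine_letter n (Suc s))
     \<and> (rank n z < rank n (spine_letter n (Suc s)) \<longrightarrow> x = flip_mb (spine_letter n s))
     \<and> (rank n (spine_letter n (Suc s)) < rank n z \<longrightarrow> x = flip_b (spine_letter n (Suc s)))"

definition spine_form :: "nat \<Rightarrow> letter \<Rightarrow> letter list \<Rightarrow> bool" where
  "spine_form n x lam \<longleftrightarrow>
     (\<exists>v s. lam = v @ spine n s \<and> (v \<noteq> [] \<longrightarrow> deviation_ok n s (last v) x))"

lemma deviation_ok_neq: "deviation_ok n s z x \<Longrightarrow> z \<noteq> spine_letter n (Suc s)"
  by (auto simp: deviation_ok_def)

lemma deviation_ok_unique:
  assumes eq: "v @ spine n s = w @ [z] @ spine n t"
    and dev: "v \<noteq> [] \<longrightarrow> deviation_ok n s (last v) x"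
    and z: "z \<noteq> spine_letter n (Suc t)"
  shows "deviation_ok n t z x"
proof (cases t s rule: linorder_cases)
  case less
  then have "(v @ spine_seg n t s) @ spine n t = (w @ [z]) @ spine n t"
    using eq spine_seg_append[of 0 t s n] by simp
  then have "v @ spine_seg n t s = w @ [z]" by simp
  then have "last (spine_seg n t s) = z"
    using less by (metis last_appendR last_snoc spine_seg_Nil_iff not_le)
  then show ?thesis using z last_spine_seg[OF less] by simp
next
  case equal
  then show ?thesis using eq dev by simp
next
  case greater
  then have "v @ spine n s = (w @ [z] @ spine_seg n s t) @ spine n s"
    using eq spine_seg_append[of 0 s t n] by simp
  then have "v = w @ [z] @ spine_seg n s t" by simp
  then have "v \<noteq> []" "last v = spine_letter n (Suc s)"
    using greater by (simp_all add: last_spine_seg)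
  then show ?thesis using dev deviation_ok_neq by blast
qed

lemma spine_form_deviation_ok:
  assumes "spine_form n x (w @ [z] @ spine n t)" and "z \<noteq> spine_letter n (Suc t)"
  shows "deviation_ok n t z x"
  using assms deviation_ok_unique unfolding spine_form_def by metis

lemma spine_form_rank_lower:
  assumes "spine_form n x (w @ [z] @ spine n t)" and "x \<noteq> flip_mb (spine_letter n t)"
  shows "rank n (spine_letter n (Suc t)) \<le> rank n z"
  using assms spine_form_deviation_ok[OF assms(1)] by (force simp: deviation_ok_def)

lemma spine_form_rank_upper:
  assumes "spine_form n x (w @ [z] @ spine n t)" and "x \<noteq> flip_b (spine_letter n (Suc t))"
  shows "rank n z \<le> rank n (spine_letter n (Suc t))"
  using assms spine_form_deviation_ok[OF assms(1)] by (force simp: deviation_ok_def)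

lemma spine_formI: "v \<noteq> [] \<longrightarrow> deviation_ok n s (last v) x \<Longrightarrow> spine_form n x (v @ spine n s)"
  by (auto simp: spine_form_def)

lemma spine_form_reduceI:
  assumes "W = reduce (v @ spine n s)" and "reduced (v @ spine n s)"
    and "v \<noteq> [] \<longrightarrow> deviation_ok n s (last v) x"
  shows "spine_form n x W"
  using assms by (auto simp: spine_form_def reduce_reduced)

lemma deviation_ok_block:
  fixes n q :: nat
  defines "p \<equiv> n + 4*q" and "r \<equiv> 2*n + 4*q"
  shows "deviation_ok n p z x \<longleftrightarrow> rank n z \<noteq> r
      \<and> (rank n z < r \<longrightarrow> x = flip_mb (spine_letter n p)) \<and> (r < rank n z \<longrightarrow> x = (Ag (Suc q), True))"
    and "deviation_ok n (Suc p) z x \<longleftrightarrow> rank n z \<noteq> r + 3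
      \<and> (rank n z < r + 3 \<longrightarrow> x = (Ag (Suc q), True)) \<and> (r + 3 < rank n z \<longrightarrow> x = (Bg (Suc q), True))"
    and "deviation_ok n (Suc (Suc p)) z x \<longleftrightarrow> rank n z \<noteq> r + 2
      \<and> (rank n z < r + 2 \<longrightarrow> x = (Bg (Suc q), True)) \<and> (r + 2 < rank n z \<longrightarrow> x = (Ag (Suc q), False))"
    and "deviation_ok n (Suc (Suc (Suc p))) z x \<longleftrightarrow> rank n z \<noteq> r + 1
      \<and> (rank n z < r + 1 \<longrightarrow> x = (Ag (Suc q), False)) \<and> (r + 1 < rank n z \<longrightarrow> x = (Bg (Suc q), False))"
    and "deviation_ok n (Suc (Suc (Suc (Suc p)))) z x \<longleftrightarrow> rank n z \<noteq> r + 4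
      \<and> (rank n z < r + 4 \<longrightarrow> x = (Bg (Suc q), False)) \<and> (r + 4 < rank n z \<longrightarrow> x = (Ag (Suc (Suc q)), True))"
  unfolding p_def r_def deviation_ok_def
  by (simp_all add: spine_letter_block spine_letter_next_block flip_b_def flip_mb_def inv_letter_def
      add.commute)

lemma rank_spine_letter_Suc: "i \<le> n \<Longrightarrow> rank n (spine_letter n (Suc i)) = 2*i"
proof (cases "Suc i \<le> n")
  case False
  assume "i \<le> n"
  then have "Suc i = Suc (n + 4*0)" using False by simp
  then show ?thesis using \<open>i \<le> n\<close> False by (simp only: spine_letter_block(1)) simp
qed (simp add: spine_letter_Mg)

lemma deviation_ok_Mg:
  assumes "Suc k \<le> n"
  shows "deviation_ok n k z x \<longleftrightarrow> rank n z \<noteq> 2*k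
      \<and> (rank n z < 2*k \<longrightarrow> x = flip_mb (spine_letter n k))
      \<and> (2*k < rank n z \<longrightarrow> x = (Mg (Suc k), True))"
    and "deviation_ok n (Suc k) z x \<longleftrightarrow> rank n z \<noteq> 2*k + 2
      \<and> (rank n z < 2*k + 2 \<longrightarrow> x = (Mg (Suc k), False))
      \<and> (2*k + 2 < rank n z \<longrightarrow> x = flip_b (spine_letter n (Suc (Suc k))))"
  using assms rank_spine_letter_Suc[of "Suc k" n]
  by (simp_all add: deviation_ok_def spine_letter_Mg flip_b_def flip_mb_def inv_letter_def)

section \<open>Multiplying by one dual letter\<close>

lemma reduced_append_spine:
  assumes "reduced v" and "v \<noteq> [] \<longrightarrow> 0 < t \<longrightarrow> last v \<noteq> inv_letter (spine_letter n t)"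
  shows "reduced (v @ spine n t)"
  using assms by (auto simp: reduced_append reduced_spine_seg hd_spine_seg)

lemma rank_inv_spine_letter_block_start:
  "Suc 0 \<le> n + 4*q \<Longrightarrow> rank n (inv_letter (spine_letter n (n + 4*q))) < 2*n + 4*q"
  by (auto simp: spine_letter_block_start inv_letter_def)

lemma reduced_append_spine_block:
  assumes "reduced v" and "v \<noteq> [] \<longrightarrow> 2*n + 4*q \<le> rank n (last v)"
  shows "reduced (v @ spine n (n + 4*q))"
  using assms rank_inv_spine_letter_block_start[of n q]
  by (intro reduced_append_spine) auto

lemma neq_inv_spine_letter_block_start:
  assumes "fst y = Ag (Suc q) \<or> fst y = Bg (Suc q)"
  shows "y \<noteq> inv_letter (spine_letter n (n + 4*q))"
proof (cases "n + 4*q")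
  case 0
  then show ?thesis using assms by (auto simp: spine_letter_Mg inv_letter_def)
next
  case (Suc t)
  then show ?thesis using assms spine_letter_block_start[of n q] by (auto simp: inv_letter_def)
qed

lemma reduced_Cons_spine_block:
  "fst c = Ag (Suc q) \<or> fst c = Bg (Suc q) \<Longrightarrow> reduced (c # spine n (n + 4*q))"
  using reduced_append_spine[of "[c]" "n + 4*q" n] neq_inv_spine_letter_block_start[of c q n]
  by simp

lemma reduce_conj_spine_below:
  assumes red: "reduced (v @ spine n s)" and sp: "s \<le> p"
    and lv: "v \<noteq> [] \<longrightarrow> last v \<noteq> spine_letter n (Suc s)"
    and rc: "reduced (c @ spine n p)" and c: "c \<noteq> []"
    and hd_gen: "fst (hd c) = fst (spine_letter n (Suc p))"
    and hd_eq: "s = p \<longrightarrow> hd c = inv_letter (spine_letter n (Suc p))"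
  shows "reduce (v @ spine n s @ inv_word (spine n p) @ c @ spine n p)
       = v @ inv_word (spine_seg n s p) @ c @ spine n p"
proof -
  have "spine n p = spine_seg n s p @ spine n s" using sp by (simp add: spine_seg_append)
  then have "reduce (v @ spine n s @ inv_word (spine n p) @ c @ spine n p)
      = reduce (v @ inv_word (spine_seg n s p) @ c @ spine n p)"
    using reduce_append_inv_word[of v "spine n s" "inv_word (spine_seg n s p) @ c @ spine n p"]
    by (simp del: spine_seg_Nil_iff)
  moreover have "reduced (v @ inv_word (spine_seg n s p) @ c @ spine n p)"
  proof (cases "s = p")
    case True
    then show ?thesis
      using red rc c lv hd_eq by (auto simp: reduced_append)
  next
    case False
    then have lt: "s < p" using sp by simp
    have "fst (spine_letter n p) \<noteq> fst (spine_letter n (Suc p))"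
      using lt fst_spine_letter_Suc_neq[of p n] by simp
    then have tail: "reduced (inv_word (spine_seg n s p) @ c @ spine n p)"
      using rc c lt hd_gen reduced_inv_word[OF reduced_spine_seg[of n s p]]
      by (auto simp: reduced_append last_inv_word hd_spine_seg inv_letter_def)
    have "hd (inv_word (spine_seg n s p) @ c @ spine n p) = inv_letter (spine_letter n (Suc s))"
      using lt by (simp add: hd_append hd_inv_word last_spine_seg)
    then show ?thesis
      using red lv tail lt unfolding reduced_append[of v] by (auto simp: reduced_append[of v "spine n s"])
  qed
  ultimately show ?thesis by (simp add: reduce_reduced)
qed

lemma reduce_conj_spine_above:
  assumes "p \<le> t" and "t \<le> s"
  shows "reduce (v @ spine n s @ inv_word (spine n p) @ c @ spine n p)
       = reduce (v @ spine_seg n t s @ reduce (spine_seg n p t @ c) @ spine n p)"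
proof -
  have "spine n s = spine_seg n t s @ spine_seg n p t @ spine n p"
    using assms by (simp add: spine_seg_append)
  then show ?thesis
    using reduce_append_inv_word[of "v @ spine_seg n t s @ spine_seg n p t" "spine n p" "c @ spine n p"]
      reduce_append_reduce[of "v @ spine_seg n t s" "spine_seg n p t @ c" "spine n p"]
    by simp
qed

lemma reduced_append_spine_Mg:
  assumes "reduced v" and "v \<noteq> [] \<longrightarrow> last v \<noteq> (Mg t, False)" and "t \<le> n"
  shows "reduced (v @ spine n t)"
  using assms reduced_append_spine[of v t n] by (simp add: spine_letter_Mg inv_letter_def)

locale spine_step =
  fixes n :: nat and v :: "letter list" and s :: nat and x_prev :: letter
  assumes reduced_word: "reduced (v @ spine n s)"
    and deviation: "v \<noteq> [] \<longrightarrow> deviation_ok n s (last v) x_prev"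
begin

lemma reduced_v: "reduced v"
  using reduced_word by (rule reduced_prefix)

lemma last_neq: "v \<noteq> [] \<longrightarrow> last v \<noteq> spine_letter n (Suc s)"
  using deviation deviation_ok_neq by blast

lemma spine_form_keep:
  assumes "W = reduce (v @ spine n t)"
    and "v \<noteq> [] \<longrightarrow> last v \<noteq> inv_letter (spine_letter n t) \<and> deviation_ok n t (last v) x"
  shows "spine_form n x W"
  using assms reduced_v by (intro spine_form_reduceI reduced_append_spine) auto

lemma spine_form_prefix:
  assumes "W = reduce ((u @ [y]) @ spine n t)" and "v @ spine n s = u @ [y] @ r"
    and "y \<noteq> inv_letter (spine_letter n t)" and "deviation_ok n t y x"
  shows "spine_form n x W"
proof (rule spine_form_reduceI[OF assms(1)])
  show "reduced ((u @ [y]) @ spine n t)"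
    using reduced_prefix[of "u @ [y]" r] reduced_word assms(2,3)
    by (intro reduced_append_spine) auto
qed (use assms(4) in simp)

lemma step_Mg_pos:
  assumes k: "Suc k \<le> n" and prev: "x_prev \<noteq> (Mg (Suc k), False)"
  shows "spine_form n (Mg (Suc k), True) (reduce (v @ spine n s @ dual_exp n (Mg (Suc k), True)))"
proof -
  let ?M = "(Mg (Suc k), True)" and ?M' = "(Mg (Suc k), False)"
  let ?W = "v @ spine n s @ inv_word (spine n k) @ [?M'] @ spine n k"
  have W: "v @ spine n s @ dual_exp n ?M = ?W" using dual_exp_Mg(1)[OF k] by simp
  consider (below) "s \<le> k" | (at) "s = Suc k" | (above) "Suc (Suc k) \<le> s" by linarith
  then show ?thesis
  proof cases
    case below
    have "reduced ([?M'] @ spine n k)"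
      using k by (intro reduced_append_spine_Mg) (simp_all add: inv_letter_def)
    then have eq: "reduce ?W = (v @ inv_word (spine_seg n s k) @ [?M']) @ spine n k"
      using reduce_conj_spine_below[OF reduced_word below last_neq, of "[?M']"] k
      by (simp add: spine_letter_Mg inv_letter_def)
    show ?thesis
      unfolding W eq by (rule spine_formI) (simp add: deviation_ok_Mg[OF k])
  next
    case at
    have high: "v \<noteq> [] \<longrightarrow> 2*k + 2 < rank n (last v)"
      using deviation prev at k by (auto simp: deviation_ok_Mg spine_letter_Mg flip_mb_def inv_letter_def)
    have "reduce ?W = reduce (v @ spine n k)"
      using reduce_conj_spine_above[of k s s v n "[?M']"] at k
      by (simp add: spine_seg_Suc spine_letter_Mg reduce_Cons inv_letter_def)
    then show ?thesis
      unfolding W by (rule spine_form_keep)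
        (use high k in \<open>auto simp: deviation_ok_Mg spine_letter_Mg inv_letter_def\<close>)
  next
    case above
    let ?d = "spine_letter n (Suc (Suc k))"
    have "reduce ?W = reduce (((v @ spine_seg n (Suc (Suc k)) s) @ [?d]) @ spine n k)"
      using reduce_conj_spine_above[of k "Suc (Suc k)" s v n "[?M']"] above k
      by (simp add: spine_seg_Suc spine_letter_Mg reduce_Cons inv_letter_def)
    moreover have "v @ spine n s = (v @ spine_seg n (Suc (Suc k)) s) @ [?d] @ spine n (Suc k)"
      using above spine_seg_append[of 0 "Suc (Suc k)" s n] by (simp add: spine_seg_Suc)
    ultimately show ?thesis
      unfolding W by (rule spine_form_prefix)
        (use k rank_spine_letter_Suc[of "Suc k" n] in \<open>auto simp: deviation_ok_Mg spine_letter_Mg inv_letter_def\<close>)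
  qed
qed

lemma step_Mg_neg:
  assumes k: "Suc k \<le> n" and prev: "x_prev \<noteq> (Mg (Suc k), True)"
  shows "spine_form n (Mg (Suc k), False) (reduce (v @ spine n s @ dual_exp n (Mg (Suc k), False)))"
proof -
  let ?M = "(Mg (Suc k), True)" and ?M' = "(Mg (Suc k), False)"
  let ?W = "v @ spine n s @ inv_word (spine n k) @ [?M] @ spine n k"
  have W: "v @ spine n s @ dual_exp n ?M' = ?W" using dual_exp_Mg(2)[OF k] by simp
  have M: "spine_letter n (Suc k) = ?M" using k by (simp add: spine_letter_Mg)
  consider (below) "s < k" | (at) "s = k" | (above) "Suc k \<le> s" by linarith
  then show ?thesis
  proof cases
    case below
    have eq: "reduce ?W = (v @ inv_word (spine_seg n s k)) @ spine n (Suc k)"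
      using reduce_conj_spine_below[OF reduced_word _ last_neq, of k "[?M]"] below
        reduced_spine_seg[of n 0 "Suc k"]
      by (simp add: M spine_seg_Suc)
    have "last (v @ inv_word (spine_seg n s k)) = (Mg k, False)"
      using below k by (simp add: last_inv_word hd_spine_seg spine_letter_Mg inv_letter_def)
    then show ?thesis
      unfolding W eq using below k by (intro spine_formI) (auto simp: deviation_ok_Mg)
  next
    case at
    have low: "v \<noteq> [] \<longrightarrow> rank n (last v) < 2*k"
      using deviation prev at k by (auto simp: deviation_ok_Mg)
    have "reduce ?W = reduce (v @ spine n (Suc k))"
      using reduce_append_inv_word[of v "spine n k" "[?M] @ spine n k"] at
      by (simp add: M spine_seg_Suc)
    then show ?thesis
      unfolding W by (rule spine_form_keep) (use low k in \<open>auto simp: M deviation_ok_Mg inv_letter_def\<close>)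
  next
    case above
    have "reduce ?W = reduce (((v @ spine_seg n (Suc k) s) @ [?M]) @ spine n (Suc k))"
      using reduce_conj_spine_above[of k "Suc k" s v n "[?M]"] above
      by (simp add: M spine_seg_Suc reduce_Cons inv_letter_def)
    moreover have "v @ spine n s = (v @ spine_seg n (Suc k) s) @ [?M] @ spine n k"
      using above spine_seg_append[of 0 "Suc k" s n] by (simp add: M spine_seg_Suc)
    ultimately show ?thesis
      unfolding W by (rule spine_form_prefix) (use k in \<open>auto simp: M deviation_ok_Mg inv_letter_def\<close>)
  qed
qed

end

locale block_step = spine_step +
  fixes q :: nat
begin

text \<open>The block \<open>h\<^sub>q\<^sub>+\<^sub>1\<close> occupies the spine positions \<open>p + 1, \<dots>, p + 4\<close>,
  which carry \<open>A, B', A', B\<close>.\<close>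

abbreviation "p \<equiv> n + 4*q"
abbreviation "A \<equiv> (Ag (Suc q), True)"
abbreviation "A' \<equiv> (Ag (Suc q), False)"
abbreviation "B \<equiv> (Bg (Suc q), True)"
abbreviation "B' \<equiv> (Bg (Suc q), False)"

abbreviation conjugated :: "letter list \<Rightarrow> letter list" where
  "conjugated c \<equiv> reduce (v @ spine n s @ inv_word (spine n p) @ c @ spine n p)"

lemma step_Ag_pos_in_block:
  assumes "p < s" "s \<le> Suc (Suc (Suc p))" and prev: "x_prev \<noteq> A'"
  shows "spine_form n A (conjugated [A', B, A])"
proof -
  consider (a) "s = Suc p" | (ba) "s = Suc (Suc p)" | (aba) "s = Suc (Suc (Suc p))"
    using assms(1,2) by linarith
  then show ?thesis
  proof cases
    case a
    have "conjugated [A', B, A] = reduce ((v @ [B]) @ spine n (Suc p))"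
      using reduce_conj_spine_above[of p s s v n "[A', B, A]"] a
      by (simp add: spine_seg_Suc spine_letter_block reduce_Cons inv_letter_def)
    moreover have "reduced ((v @ [B]) @ spine n (Suc p))"
      using reduced_v last_neq a by (auto simp: reduced_append spine_seg_Suc spine_letter_block
          reduced_Cons_spine_block inv_letter_def prod_eq_iff)
    ultimately show ?thesis by (rule spine_form_reduceI) (simp add: deviation_ok_block)
  next
    case ba
    have low: "v \<noteq> [] \<longrightarrow> rank n (last v) < 2*n + 4*q + 2"
      using deviation prev ba by (auto simp: deviation_ok_block)
    have "conjugated [A', B, A] = reduce (v @ spine n (Suc p))"
      using reduce_conj_spine_above[of p s s v n "[A', B, A]"] ba
      by (simp add: spine_seg_Suc spine_letter_block reduce_Cons inv_letter_def)
    then show ?thesis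
      by (rule spine_form_keep)
        (use low in \<open>auto simp: spine_letter_block deviation_ok_block inv_letter_def\<close>)
  next
    case aba
    have high: "v \<noteq> [] \<longrightarrow> 2*n + 4*q + 1 < rank n (last v)"
      using deviation prev aba by (auto simp: deviation_ok_block)
    have "conjugated [A', B, A] = reduce (v @ spine n p)"
      using reduce_conj_spine_above[of p s s v n "[A', B, A]"] aba
      by (simp add: spine_seg_Suc spine_letter_block reduce_Cons inv_letter_def)
    moreover have "reduced (v @ spine n p)"
      using reduced_v high by (intro reduced_append_spine_block) auto
    ultimately show ?thesis
      by (rule spine_form_reduceI) (use high in \<open>auto simp: deviation_ok_block\<close>)
  qed
qed

lemma step_Ag_pos:
  assumes prev: "x_prev \<noteq> A'"
  shows "spine_form n A (reduce (v @ spine n s @ dual_exp n A))"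
proof -
  have W: "reduce (v @ spine n s @ dual_exp n A) = conjugated [A', B, A]"
    using dual_exp_Ag_Bg(1)[of "v @ spine n s" n q] by simp
  consider (below) "s \<le> p" | (in_block) "p < s" "s \<le> Suc (Suc (Suc p))"
    | (above) "Suc (Suc (Suc (Suc p))) \<le> s"
    by linarith
  then show ?thesis
  proof cases
    case below
    have eq: "conjugated [A', B, A] = (v @ inv_word (spine_seg n s p) @ [A', B]) @ spine n (Suc p)"
      using reduce_conj_spine_below[OF reduced_word below last_neq, of "[A', B, A]"]
      by (simp add: spine_seg_Suc spine_letter_block reduced_Cons_spine_block inv_letter_def)
    show ?thesis
      unfolding W eq by (rule spine_formI) (simp add: deviation_ok_block)
  next
    case above
    let ?t = "Suc (Suc (Suc (Suc p)))"
    have "conjugated [A', B, A] = reduce (((v @ spine_seg n ?t s) @ [B]) @ spine n p)"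
      using reduce_conj_spine_above[OF _ above, of p v n "[A', B, A]"]
      by (simp add: spine_seg_Suc spine_letter_block reduce_Cons inv_letter_def)
    moreover have "v @ spine n s = (v @ spine_seg n ?t s) @ [B] @ spine n (Suc (Suc (Suc p)))"
      using above spine_seg_append[of 0 ?t s n] by (simp add: spine_seg_Suc spine_letter_block)
    ultimately show ?thesis
      unfolding W by (rule spine_form_prefix)
        (simp_all add: deviation_ok_block neq_inv_spine_letter_block_start)
  qed (use W step_Ag_pos_in_block prev in simp)
qed

lemma step_Ag_neg_in_block:
  assumes "p \<le> s" "s \<le> Suc p" and prev: "x_prev \<noteq> A"
  shows "spine_form n A' (conjugated [A', B', A])"
proof -
  consider (at) "s = p" | (a) "s = Suc p"
    using assms(1,2) by linarith
  then show ?thesis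
  proof cases
    case at
    have low: "v \<noteq> [] \<longrightarrow> rank n (last v) < 2*n + 4*q"
      using deviation prev at by (auto simp: deviation_ok_block)
    have "conjugated [A', B', A] = reduce (v @ spine n (Suc (Suc (Suc p))))"
      using reduce_append_inv_word[of v "spine n p" "[A', B', A] @ spine n p"] at
      by (simp add: spine_seg_Suc spine_letter_block)
    then show ?thesis
      by (rule spine_form_keep)
        (use low in \<open>auto simp: spine_letter_block deviation_ok_block inv_letter_def\<close>)
  next
    case a
    have high: "v \<noteq> [] \<longrightarrow> 2*n + 4*q + 3 < rank n (last v)"
      using deviation prev a by (auto simp: deviation_ok_block)
    have "conjugated [A', B', A] = reduce (v @ spine n (Suc (Suc p)))"
      using reduce_conj_spine_above[of p s s v n "[A', B', A]"] a
      by (simp add: spine_seg_Suc spine_letter_block reduce_Cons inv_letter_def)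
    then show ?thesis
      by (rule spine_form_keep)
        (use high in \<open>auto simp: spine_letter_block deviation_ok_block inv_letter_def\<close>)
  qed
qed

lemma step_Ag_neg:
  assumes prev: "x_prev \<noteq> A"
  shows "spine_form n A' (reduce (v @ spine n s @ dual_exp n A'))"
proof -
  have W: "reduce (v @ spine n s @ dual_exp n A') = conjugated [A', B', A]"
    using dual_exp_Ag_Bg(2)[of "v @ spine n s" n q] by simp
  consider (below) "s < p" | (in_block) "p \<le> s" "s \<le> Suc p" | (above) "Suc (Suc p) \<le> s"
    by linarith
  then show ?thesis
  proof cases
    case below
    let ?v = "v @ inv_word (spine_seg n s p)"
    have eq: "conjugated [A', B', A] = ?v @ spine n (Suc (Suc (Suc p)))"
      using reduce_conj_spine_below[OF reduced_word _ last_neq, of p "[A', B', A]"] below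
      by (simp add: spine_seg_Suc spine_letter_block reduced_Cons_spine_block inv_letter_def)
    have "rank n (last ?v) < 2*n + 4*q"
      using below rank_inv_spine_letter_block_start[of n q] by (simp add: last_inv_word hd_spine_seg)
    then show ?thesis
      unfolding W eq by (intro spine_formI) (auto simp: deviation_ok_block)
  next
    case above
    let ?t = "Suc (Suc p)"
    have "conjugated [A', B', A] = reduce (((v @ spine_seg n ?t s) @ [B']) @ spine n ?t)"
      using reduce_conj_spine_above[OF _ above, of p v n "[A', B', A]"]
      by (simp add: spine_seg_Suc spine_letter_block reduce_Cons inv_letter_def)
    moreover have "v @ spine n s = (v @ spine_seg n ?t s) @ [B'] @ [A] @ spine n p"
      using above spine_seg_append[of 0 ?t s n] by (simp add: spine_seg_Suc spine_letter_block)
    ultimately show ?thesis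
      unfolding W by (rule spine_form_prefix) (auto simp: spine_letter_block deviation_ok_block)
  qed (use W step_Ag_neg_in_block prev in simp)
qed

lemma step_Bg_pos_in_block_low:
  assumes "p < s" "s \<le> Suc (Suc p)"
  shows "spine_form n B (conjugated [A', B, A, B', A])"
proof -
  consider (a) "s = Suc p" | (ba) "s = Suc (Suc p)"
    using assms by linarith
  then show ?thesis
  proof cases
    case a
    have "conjugated [A', B, A, B', A] = reduce ((v @ [B, A]) @ spine n (Suc (Suc p)))"
      using reduce_conj_spine_above[of p s s v n "[A', B, A, B', A]"] a
      by (simp add: spine_seg_Suc spine_letter_block reduce_Cons inv_letter_def)
    moreover have "reduced ((v @ [B, A]) @ spine n (Suc (Suc p)))"
      using reduced_v last_neq a by (auto simp: reduced_append spine_seg_Suc spine_letter_block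
          reduced_Cons_spine_block inv_letter_def prod_eq_iff)
    ultimately show ?thesis by (rule spine_form_reduceI) (simp add: deviation_ok_block)
  next
    case ba
    have "conjugated [A', B, A, B', A] = reduce ((v @ [A]) @ spine n (Suc (Suc p)))"
      using reduce_conj_spine_above[of p s s v n "[A', B, A, B', A]"] ba
      by (simp add: spine_seg_Suc spine_letter_block reduce_Cons inv_letter_def)
    moreover have "reduced ((v @ [A]) @ spine n (Suc (Suc p)))"
      using reduced_v last_neq ba by (auto simp: reduced_append spine_seg_Suc spine_letter_block
          reduced_Cons_spine_block inv_letter_def prod_eq_iff)
    ultimately show ?thesis by (rule spine_form_reduceI) (simp add: deviation_ok_block)
  qed
qed

lemma step_Bg_pos_in_block_high:
  assumes "Suc (Suc p) < s" "s \<le> Suc (Suc (Suc (Suc p)))" and prev: "x_prev \<noteq> B'"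
  shows "spine_form n B (conjugated [A', B, A, B', A])"
proof -
  consider (aba) "s = Suc (Suc (Suc p))" | (baba) "s = Suc (Suc (Suc (Suc p)))"
    using assms(1,2) by linarith
  then show ?thesis
  proof cases
    case aba
    have low: "v \<noteq> [] \<longrightarrow> rank n (last v) < 2*n + 4*q + 1"
      using deviation prev aba by (auto simp: deviation_ok_block)
    have "conjugated [A', B, A, B', A] = reduce (v @ spine n (Suc (Suc p)))"
      using reduce_conj_spine_above[of p s s v n "[A', B, A, B', A]"] aba
      by (simp add: spine_seg_Suc spine_letter_block reduce_Cons inv_letter_def)
    then show ?thesis
      by (rule spine_form_keep)
        (use low in \<open>auto simp: spine_letter_block deviation_ok_block inv_letter_def\<close>)
  next
    case baba
    have high: "v \<noteq> [] \<longrightarrow> 2*n + 4*q + 4 < rank n (last v)"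
      using deviation prev baba by (auto simp: deviation_ok_block)
    have "conjugated [A', B, A, B', A] = reduce (v @ spine n (Suc p))"
      using reduce_conj_spine_above[of p s s v n "[A', B, A, B', A]"] baba
      by (simp add: spine_seg_Suc spine_letter_block reduce_Cons inv_letter_def)
    then show ?thesis
      by (rule spine_form_keep)
        (use high in \<open>auto simp: spine_letter_block deviation_ok_block inv_letter_def\<close>)
  qed
qed

lemma step_Bg_pos:
  assumes prev: "x_prev \<noteq> B'"
  shows "spine_form n B (reduce (v @ spine n s @ dual_exp n B))"
proof -
  have W: "reduce (v @ spine n s @ dual_exp n B) = conjugated [A', B, A, B', A]"
    using dual_exp_Ag_Bg(3)[of "v @ spine n s" n q] by simp
  consider (below) "s \<le> p" | (in_block_low) "p < s" "s \<le> Suc (Suc p)"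
    | (in_block_high) "Suc (Suc p) < s" "s \<le> Suc (Suc (Suc (Suc p)))"
    | (above) "Suc (Suc (Suc (Suc (Suc p)))) \<le> s"
    by linarith
  then show ?thesis
  proof cases
    case below
    have eq: "conjugated [A', B, A, B', A]
        = (v @ inv_word (spine_seg n s p) @ [A', B, A]) @ spine n (Suc (Suc p))"
      using reduce_conj_spine_below[OF reduced_word below last_neq, of "[A', B, A, B', A]"]
      by (simp add: spine_seg_Suc spine_letter_block reduced_Cons_spine_block inv_letter_def)
    show ?thesis
      unfolding W eq by (rule spine_formI) (simp add: deviation_ok_block)
  next
    case above
    let ?t = "Suc (Suc (Suc (Suc (Suc p))))" and ?A2 = "(Ag (Suc (Suc q)), True)"
    have "conjugated [A', B, A, B', A] = reduce (((v @ spine_seg n ?t s) @ [?A2]) @ spine n (Suc p))"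
      using reduce_conj_spine_above[OF _ above, of p v n "[A', B, A, B', A]"]
      by (simp add: spine_seg_Suc spine_letter_block spine_letter_next_block reduce_Cons inv_letter_def)
    moreover have "v @ spine n s = (v @ spine_seg n ?t s) @ [?A2] @ spine n (Suc (Suc (Suc (Suc p))))"
      using above spine_seg_append[of 0 ?t s n] by (simp add: spine_seg_Suc spine_letter_next_block)
    ultimately show ?thesis
      unfolding W by (rule spine_form_prefix) (auto simp: spine_letter_block deviation_ok_block inv_letter_def)
  qed (use W step_Bg_pos_in_block_low step_Bg_pos_in_block_high prev in simp_all)
qed

lemma step_Bg_neg_in_block:
  assumes "p < s" "s \<le> Suc (Suc p)" and prev: "x_prev \<noteq> B"
  shows "spine_form n B' (conjugated [A', B, A', B', A])"
proof -
  consider (a) "s = Suc p" | (ba) "s = Suc (Suc p)"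
    using assms(1,2) by linarith
  then show ?thesis
  proof cases
    case a
    have low: "v \<noteq> [] \<longrightarrow> rank n (last v) < 2*n + 4*q + 3"
      using deviation prev a by (auto simp: deviation_ok_block)
    have "conjugated [A', B, A', B', A] = reduce (v @ spine n (Suc (Suc (Suc (Suc p)))))"
      using reduce_conj_spine_above[of p s s v n "[A', B, A', B', A]"] a
      by (simp add: spine_seg_Suc spine_letter_block reduce_Cons inv_letter_def)
    then show ?thesis
      by (rule spine_form_keep)
        (use low in \<open>auto simp: spine_letter_block deviation_ok_block inv_letter_def\<close>)
  next
    case ba
    have high: "v \<noteq> [] \<longrightarrow> 2*n + 4*q + 2 < rank n (last v)"
      using deviation prev ba by (auto simp: deviation_ok_block)
    have "conjugated [A', B, A', B', A] = reduce (v @ spine n (Suc (Suc (Suc p))))"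
      using reduce_conj_spine_above[of p s s v n "[A', B, A', B', A]"] ba
      by (simp add: spine_seg_Suc spine_letter_block reduce_Cons inv_letter_def)
    then show ?thesis
      by (rule spine_form_keep)
        (use high in \<open>auto simp: spine_letter_block deviation_ok_block inv_letter_def\<close>)
  qed
qed

lemma step_Bg_neg:
  assumes prev: "x_prev \<noteq> B"
  shows "spine_form n B' (reduce (v @ spine n s @ dual_exp n B'))"
proof -
  have W: "reduce (v @ spine n s @ dual_exp n B') = conjugated [A', B, A', B', A]"
    using dual_exp_Ag_Bg(4)[of "v @ spine n s" n q] by simp
  consider (below) "s \<le> p" | (in_block) "p < s" "s \<le> Suc (Suc p)" | (above) "Suc (Suc (Suc p)) \<le> s"
    by linarith
  then show ?thesis
  proof cases
    case below
    have eq: "conjugated [A', B, A', B', A]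
        = (v @ inv_word (spine_seg n s p) @ [A']) @ spine n (Suc (Suc (Suc (Suc p))))"
      using reduce_conj_spine_below[OF reduced_word below last_neq, of "[A', B, A', B', A]"]
      by (simp add: spine_seg_Suc spine_letter_block reduced_Cons_spine_block inv_letter_def)
    show ?thesis
      unfolding W eq by (rule spine_formI) (simp add: deviation_ok_block)
  next
    case above
    let ?t = "Suc (Suc (Suc p))"
    have "conjugated [A', B, A', B', A] = reduce (((v @ spine_seg n ?t s) @ [A']) @ spine n ?t)"
      using reduce_conj_spine_above[OF _ above, of p v n "[A', B, A', B', A]"]
      by (simp add: spine_seg_Suc spine_letter_block reduce_Cons inv_letter_def)
    moreover have "v @ spine n s = (v @ spine_seg n ?t s) @ [A'] @ [B', A] @ spine n p"
      using above spine_seg_append[of 0 ?t s n] by (simp add: spine_seg_Suc spine_letter_block)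
    ultimately show ?thesis
      unfolding W by (rule spine_form_prefix) (auto simp: spine_letter_block deviation_ok_block)
  qed (use W step_Bg_neg_in_block prev in simp)
qed

end

context spine_step
begin

lemma spine_form_step:
  assumes "valid_gen n g (fst x)" and "x \<noteq> inv_letter x_prev"
  shows "spine_form n x (reduce (v @ spine n s @ dual_exp n x))"
proof -
  obtain y b where x: "x = (y, b)" by (cases x)
  have prev: "x_prev \<noteq> inv_letter x" using assms(2) by auto
  show ?thesis
  proof (cases y)
    case (Mg i)
    then obtain k where "i = Suc k" "Suc k \<le> n"
      using assms(1) x by (cases i) (auto simp: valid_gen_def)
    then show ?thesis
      using step_Mg_pos step_Mg_neg prev x Mg by (cases b) (auto simp: inv_letter_def)
  next
    case (Ag j)
    then obtain q where "j = Suc q" using assms(1) x by (cases j) (auto simp: valid_gen_def)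
    interpret block_step n v s x_prev q ..
    show ?thesis
      using step_Ag_pos step_Ag_neg prev x Ag \<open>j = Suc q\<close> by (cases b) (auto simp: inv_letter_def)
  next
    case (Bg j)
    then obtain q where "j = Suc q" using assms(1) x by (cases j) (auto simp: valid_gen_def)
    interpret block_step n v s x_prev q ..
    show ?thesis
      using step_Bg_pos step_Bg_neg prev x Bg \<open>j = Suc q\<close> by (cases b) (auto simp: inv_letter_def)
  qed
qed

end

lemma spine_form_dual_eval:
  assumes "\<forall>l \<in> set du. valid_gen n g (fst l)" and "reduced du" and "du \<noteq> []"
  shows "spine_form n (last du) (dual_eval n du)"
  using assms
proof (induction du rule: rev_induct)
  case (snoc x du)
  have eval: "dual_eval n (du @ [x]) = reduce (dual_eval n du @ dual_exp n x)"
    using reduce_append_reduce[of "[]" "concat (map (dual_exp n) du)" "dual_exp n x"]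
    by (simp add: dual_eval_def)
  obtain x_prev where inv: "spine_form n x_prev (dual_eval n du)" and prev: "x \<noteq> inv_letter x_prev"
  proof (cases "du = []")
    case True
    then show ?thesis using that[of x] by (auto simp: dual_eval_def spine_form_def)
  next
    case False
    then show ?thesis
      using that[of "last du"] snoc by (simp add: reduced_append)
  qed
  then obtain v s where "dual_eval n du = v @ spine n s" "v \<noteq> [] \<longrightarrow> deviation_ok n s (last v) x_prev"
    by (auto simp: spine_form_def)
  moreover have "reduced (dual_eval n du)" by (simp add: dual_eval_def)
  ultimately interpret spine_step n v s x_prev by unfold_locales auto
  show ?case
    using spine_form_step[of g x, OF _ prev] snoc.prems eval \<open>dual_eval n du = _\<close> by simp
qed simp

section \<open>Letters of a dual evaluation\<close>

lemma valid_spine_letter: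
  assumes "k \<le> n + 4*g" and "1 \<le> k"
  shows "valid_gen n g (fst (spine_letter n k))"
proof (cases "k \<le> n")
  case False
  define q where "q = (k - Suc n) div 4"
  have "Suc q \<le> g" using False assms(1) by (simp add: q_def less_eq_div_iff_mult_less_eq)
  moreover have "spine_letter n k = rev (hword (Suc q)) ! ((k - Suc n) mod 4)"
    using False by (simp add: spine_letter_def q_def)
  then have "spine_letter n k \<in> set (rev (hword (Suc q)))"
    by (simp only:) (rule nth_mem, simp add: hword_def)
  ultimately show ?thesis by (auto simp: hword_def valid_gen_def)
qed (use assms in \<open>simp add: spine_letter_Mg valid_gen_def\<close>)

lemma valid_spine_seg:
  "b \<le> n + 4*g \<Longrightarrow> l \<in> set (spine_seg n a b) \<Longrightarrow> valid_gen n g (fst l)"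
  by (auto simp: spine_seg_def intro: valid_spine_letter)

lemma valid_hat_word:
  assumes y: "valid_gen n g y" and l: "l \<in> set (hat_word n y)"
  shows "valid_gen n g (fst l)"
proof -
  have spine: "valid_gen n g (fst l)" if "l \<in> set (inv_word (spine n t)) \<union> set (spine n t)"
    and "t \<le> n + 4*g" for t
    using that valid_spine_seg[of t n g l 0] valid_spine_seg[of t n g "inv_letter l" 0]
    by (auto simp: set_inv_word)
  show ?thesis
  proof (cases y)
    case (Mg i)
    have "mseq (i - 1) = spine n (i - 1)"
      using Mg y by (intro mseq_eq_spine) (auto simp: valid_gen_def)
    then have "hat_word n y = inv_word (spine n (i - 1)) @ [(Mg i, False)] @ spine n (i - 1)"
      using Mg by simp
    then show ?thesis
      using y l Mg spine[of "i - 1"] by (auto simp: valid_gen_def)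
  next
    case (Ag j)
    then obtain q where q: "j = Suc q" using y by (cases j) (auto simp: valid_gen_def)
    have "hat_word n y = inv_word (spine n (n + 4*j)) @ [(Bg j, True)] @ spine n (n + 4*q)"
      using Ag q by (simp add: Pw_eq_spine P'w_eq_spine)
    then show ?thesis
      using y l Ag q spine[of "n + 4*q"] spine[of "n + 4*j"] by (auto simp: valid_gen_def)
  next
    case (Bg j)
    then obtain q where q: "j = Suc q" using y by (cases j) (auto simp: valid_gen_def)
    have "hat_word n y = inv_word (spine n (n + 4*j)) @ [(Ag j, True)] @ spine n (n + 4*q)"
      using Bg q by (simp add: Pw_eq_spine P'w_eq_spine)
    then show ?thesis
      using y l Bg q spine[of "n + 4*q"] spine[of "n + 4*j"] by (auto simp: valid_gen_def)
  qed
qed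

lemma valid_dual_exp:
  assumes x: "valid_gen n g (fst x)" and l: "l \<in> set (dual_exp n x)"
  shows "valid_gen n g (fst l)"
proof -
  have "fst ` set (dual_exp n x) = fst ` set (hat_word n (fst x))"
    by (simp add: dual_exp_def set_inv_word image_image)
  then obtain y where "y \<in> set (hat_word n (fst x))" "fst l = fst y"
    using l by (metis imageE imageI)
  then show ?thesis using valid_hat_word[OF x] by simp
qed

lemma valid_dual_eval:
  assumes du: "\<forall>x \<in> set du. valid_gen n g (fst x)" and l: "l \<in> set (dual_eval n du)"
  shows "valid_gen n g (fst l)"
proof -
  have "l \<in> set (concat (map (dual_exp n) du))"
    using set_reduce_subset[of "concat (map (dual_exp n) du)"] l unfolding dual_eval_def by blast
  then obtain x where "x \<in> set du" "l \<in> set (dual_exp n x)" by auto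
  then show ?thesis using du valid_dual_exp by blast
qed

section \<open>The ten claims\<close>

lemma spine_block_words:
  "(Ag (Suc q), True) # Pw n (Suc q) = spine n (Suc (n + 4*q))"
  "[(Bg (Suc q), False), (Ag (Suc q), True)] @ Pw n (Suc q) = spine n (Suc (Suc (n + 4*q)))"
  "[(Ag (Suc q), False), (Bg (Suc q), False), (Ag (Suc q), True)] @ Pw n (Suc q)
     = spine n (Suc (Suc (Suc (n + 4*q))))"
  "P'w n (Suc q) = spine n (Suc (Suc (Suc (Suc (n + 4*q)))))"
proof -
  have "n + 4 * Suc q = Suc (Suc (Suc (Suc (n + 4*q))))" by simp
  then show "P'w n (Suc q) = spine n (Suc (Suc (Suc (Suc (n + 4*q)))))"
    by (simp only: P'w_eq_spine)
qed (simp_all add: Pw_eq_spine spine_seg_Suc spine_letter_block)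

lemma reduced_letter_before: "reduced (w @ [z] @ l # r) \<Longrightarrow> z \<noteq> inv_letter l"
  by (auto simp: reduced_append)

lemma lemma3p3_i:
  assumes inv: "spine_form n x (w @ [z] @ w')" and zv: "valid_gen n g (fst z)"
    and i: "1 \<le> i" "i \<le> n" and w': "w' = mseq i" and x: "x \<noteq> (Mg i, False)"
  shows "z \<in> pm (Ms (Suc i) n \<union> ABs 1 g)"
proof -
  have "spine_form n x (w @ [z] @ spine n i)"
    using inv w' i by (simp add: mseq_eq_spine)
  then have "2*i \<le> rank n z"
    using spine_form_rank_lower x i rank_spine_letter_Suc[of i n]
    by (fastforce simp: spine_letter_Mg flip_mb_def inv_letter_def)
  then show ?thesis
    using zv by (cases z; cases "fst z") (auto simp: pm_def Ms_def ABs_def valid_gen_def split: if_splits)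
qed

lemma lemma3p3_ii:
  assumes inv: "spine_form n x (w @ [z] @ w')" and zv: "valid_gen n g (fst z)"
    and i: "1 \<le> i" "i \<le> n" and w': "w' = mseq (i - 1)" and x: "x \<noteq> (Mg i, True)"
  shows "z \<in> pm (Ms 1 (i - 1)) \<union> {(Mg i, True)}"
proof -
  have "spine_form n x (w @ [z] @ spine n (i - 1))"
    using inv w' mseq_eq_spine[of "i - 1" n] i by simp
  moreover have "spine_letter n (Suc (i - 1)) = (Mg i, True)"
    using i by (simp add: spine_letter_Mg)
  ultimately have "rank n z \<le> 2*i - 2"
    using spine_form_rank_upper x by (fastforce simp: flip_b_def)
  then show ?thesis
    using zv i by (cases z; cases "fst z") (auto simp: pm_def Ms_def ABs_def valid_gen_def split: if_splits)
qed

lemma lemma3p3_iii: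
  assumes inv: "spine_form n x (w @ [z] @ w')" and zv: "valid_gen n g (fst z)"
    and j: "1 \<le> j" "j \<le> g" and w': "w' = Pw n j" and x: "x \<noteq> (Ag j, True)"
  shows "z \<in> pm (Ms 1 n \<union> ABs 1 (j - 1)) \<union> {(Ag j, True)}"
proof -
  obtain q where q: "j = Suc q" using j by (cases j) auto
  have "spine_form n x (w @ [z] @ spine n (n + 4*q))"
    using inv unfolding w' q Pw_eq_spine .
  then have "rank n z \<le> 2*n + 4*q"
    using spine_form_rank_upper x q by (fastforce simp: spine_letter_block flip_b_def)
  then show ?thesis
    using zv q by (cases z; cases "fst z") (auto simp: pm_def Ms_def ABs_def valid_gen_def split: if_splits)
qed

lemma lemma3p3_iv:
  assumes inv: "spine_form n x (w @ [z] @ w')"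
    and zv: "valid_gen n g (fst z)"
    and j: "1 \<le> j" "j \<le> g" and w': "w' = (Ag j, True) # Pw n j"
    and x: "x \<noteq> (Ag j, True)"
  shows "z \<in> {(Bg j, False)} \<union> pm (ABs (Suc j) g)"
proof -
  obtain q where q: "j = Suc q" using j by (cases j) auto
  have "spine_form n x (w @ [z] @ spine n (Suc (n + 4*q)))"
    using inv unfolding w' q spine_block_words(1) .
  then have "2*n + 4*q + 3 \<le> rank n z"
    using spine_form_rank_lower x q by (fastforce simp: spine_letter_block flip_mb_def inv_letter_def)
  then show ?thesis
    using zv q by (cases z; cases "fst z") (auto simp: pm_def Ms_def ABs_def valid_gen_def split: if_splits)
qed

lemma lemma3p3_v:
  assumes inv: "spine_form n x (w @ [z] @ w')"
    and zv: "valid_gen n g (fst z)"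
    and j: "1 \<le> j" "j \<le> g" and w': "w' = [(Ag j, False), (Bg j, False), (Ag j, True)] @ Pw n j"
    and x: "x \<noteq> (Ag j, False)"
  shows "z \<in> {(Ag j, False)} \<union> pm ({Bg j} \<union> ABs (Suc j) g)"
proof -
  obtain q where q: "j = Suc q" using j by (cases j) auto
  have "spine_form n x (w @ [z] @ spine n (Suc (Suc (Suc (n + 4*q)))))"
    using inv unfolding w' q spine_block_words(3) .
  then have "2*n + 4*q + 1 \<le> rank n z"
    using spine_form_rank_lower x q by (fastforce simp: spine_letter_block flip_mb_def inv_letter_def)
  then show ?thesis
    using zv q by (cases z; cases "fst z") (auto simp: pm_def Ms_def ABs_def valid_gen_def split: if_splits)
qed

lemma lemma3p3_vi:
  assumes inv: "spine_form n x (w @ [z] @ w')"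
    and red: "reduced (w @ [z] @ w')"
    and zv: "valid_gen n g (fst z)"
    and j: "1 \<le> j" "j \<le> g" and w': "w' = [(Bg j, False), (Ag j, True)] @ Pw n j"
    and x: "x \<noteq> (Ag j, False)"
  shows "z \<in> pm (Ms 1 n \<union> ABs 1 (j - 1) \<union> {Ag j})"
proof -
  obtain q where q: "j = Suc q" using j by (cases j) auto
  have "spine_form n x (w @ [z] @ spine n (Suc (Suc (n + 4*q))))"
    using inv unfolding w' q spine_block_words(2) .
  then have "rank n z \<le> 2*n + 4*q + 2"
    using spine_form_rank_upper x q by (fastforce simp: spine_letter_block flip_b_def inv_letter_def)
  moreover have "z \<noteq> (Bg j, True)"
    using reduced_letter_before[of w z "(Bg j, False)"] red w' by (simp add: inv_letter_def)
  ultimately show ?thesis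
    using zv q by (cases z; cases "fst z") (auto simp: pm_def Ms_def ABs_def valid_gen_def split: if_splits)
qed

lemma lemma3p3_vii:
  assumes inv: "spine_form n x (w @ [z] @ w')"
    and zv: "valid_gen n g (fst z)"
    and j: "1 \<le> j" "j \<le> g" and w': "w' = [(Bg j, False), (Ag j, True)] @ Pw n j"
    and x: "x \<noteq> (Bg j, True)"
  shows "z \<in> {(Ag j, False), (Bg j, False)} \<union> pm (ABs (Suc j) g)"
proof -
  obtain q where q: "j = Suc q" using j by (cases j) auto
  have "spine_form n x (w @ [z] @ spine n (Suc (Suc (n + 4*q))))"
    using inv unfolding w' q spine_block_words(2) .
  then have "2*n + 4*q + 2 \<le> rank n z"
    using spine_form_rank_lower x q by (fastforce simp: spine_letter_block flip_mb_def inv_letter_def)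
  then show ?thesis
    using zv q by (cases z; cases "fst z") (auto simp: pm_def Ms_def ABs_def valid_gen_def split: if_splits)
qed

lemma lemma3p3_viii:
  assumes inv: "spine_form n x (w @ [z] @ w')"
    and red: "reduced (w @ [z] @ w')"
    and zv: "valid_gen n g (fst z)"
    and j: "1 \<le> j" "j \<le> g" and w': "w' = (Ag j, True) # Pw n j"
    and x: "x \<noteq> (Bg j, True)"
  shows "z \<in> pm (Ms 1 n \<union> ABs 1 (j - 1)) \<union> {(Ag j, True)} \<union> pm {Bg j}"
proof -
  obtain q where q: "j = Suc q" using j by (cases j) auto
  have "spine_form n x (w @ [z] @ spine n (Suc (n + 4*q)))"
    using inv unfolding w' q spine_block_words(1) .
  then have "rank n z \<le> 2*n + 4*q + 3"
    using spine_form_rank_upper x q by (fastforce simp: spine_letter_block flip_b_def inv_letter_def)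
  moreover have "z \<noteq> (Ag j, False)"
    using reduced_letter_before[of w z "(Ag j, True)"] red w' by (simp add: inv_letter_def)
  ultimately show ?thesis
    using zv q by (cases z; cases "fst z") (auto simp: pm_def Ms_def ABs_def valid_gen_def split: if_splits)
qed

lemma lemma3p3_ix:
  assumes inv: "spine_form n x (w @ [z] @ w')"
    and red: "reduced (w @ [z] @ w')"
    and zv: "valid_gen n g (fst z)"
    and j: "1 \<le> j" "j \<le> g" and w': "w' = [(Ag j, False), (Bg j, False), (Ag j, True)] @ Pw n j"
    and x: "x \<noteq> (Bg j, False)"
  shows "z \<in> pm (Ms 1 n \<union> ABs 1 (j - 1)) \<union> {(Bg j, True)}"
proof -
  obtain q where q: "j = Suc q" using j by (cases j) auto
  have "spine_form n x (w @ [z] @ spine n (Suc (Suc (Suc (n + 4*q)))))"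
    using inv unfolding w' q spine_block_words(3) .
  then have "rank n z \<le> 2*n + 4*q + 1"
    using spine_form_rank_upper x q by (fastforce simp: spine_letter_block flip_b_def inv_letter_def)
  moreover have "z \<noteq> (Ag j, True)"
    using reduced_letter_before[of w z "(Ag j, False)"] red w' by (simp add: inv_letter_def)
  ultimately show ?thesis
    using zv q by (cases z; cases "fst z") (auto simp: pm_def Ms_def ABs_def valid_gen_def split: if_splits)
qed

lemma lemma3p3_x:
  assumes inv: "spine_form n x (w @ [z] @ w')"
    and zv: "valid_gen n g (fst z)"
    and j: "1 \<le> j" "j \<le> g" and w': "w' = P'w n j"
    and x: "x \<noteq> (Bg j, False)"
  shows "z \<in> pm (ABs (Suc j) g)"
proof -
  obtain q where q: "j = Suc q" using j by (cases j) auto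
  have "spine_form n x (w @ [z] @ spine n (Suc (Suc (Suc (Suc (n + 4*q))))))"
    using inv unfolding w' q spine_block_words(4) .
  then have "2*n + 4*q + 4 \<le> rank n z"
    using spine_form_rank_lower x q by (fastforce simp: spine_letter_block spine_letter_next_block flip_mb_def inv_letter_def)
  then show ?thesis
    using zv q by (cases z; cases "fst z") (auto simp: pm_def Ms_def ABs_def valid_gen_def split: if_splits)
qed

theorem lemma3p3:
  fixes n g :: nat and du w w' :: "letter list" and z :: letter
  assumes du_valid: "\<forall>l \<in> set du. valid_gen n g (fst l)"
    and du_red: "reduced du"
    and du_ne: "du \<noteq> []"
    and form: "dual_eval n du = w @ [z] @ w'"
    and w_red: "reduced w" and w'_red: "reduced w'"
  shows
   "(\<forall>i. 1 \<le> i \<and> i \<le> n \<and> w' = mseq i \<and> last du \<noteq> (Mg i, False)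
        \<longrightarrow> z \<in> pm (Ms (Suc i) n \<union> ABs 1 g))
  \<and> (\<forall>i. 1 \<le> i \<and> i \<le> n \<and> w' = mseq (i - 1) \<and> last du \<noteq> (Mg i, True)
        \<longrightarrow> z \<in> pm (Ms 1 (i - 1)) \<union> {(Mg i, True)})
  \<and> (\<forall>j. 1 \<le> j \<and> j \<le> g \<and> w' = Pw n j \<and> last du \<noteq> (Ag j, True)
        \<longrightarrow> z \<in> pm (Ms 1 n \<union> ABs 1 (j - 1)) \<union> {(Ag j, True)})
  \<and> (\<forall>j. 1 \<le> j \<and> j \<le> g \<and> w' = (Ag j, True) # Pw n j \<and> last du \<noteq> (Ag j, True)
        \<longrightarrow> z \<in> {(Bg j, False)} \<union> pm (ABs (Suc j) g))
  \<and> (\<forall>j. 1 \<le> j \<and> j \<le> g \<and> w' = [(Ag j, False), (Bg j, False), (Ag j, True)] @ Pw n j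
          \<and> last du \<noteq> (Ag j, False)
        \<longrightarrow> z \<in> {(Ag j, False)} \<union> pm ({Bg j} \<union> ABs (Suc j) g))
  \<and> (\<forall>j. 1 \<le> j \<and> j \<le> g \<and> w' = [(Bg j, False), (Ag j, True)] @ Pw n j
          \<and> last du \<noteq> (Ag j, False)
        \<longrightarrow> z \<in> pm (Ms 1 n \<union> ABs 1 (j - 1) \<union> {Ag j}))
  \<and> (\<forall>j. 1 \<le> j \<and> j \<le> g \<and> w' = [(Bg j, False), (Ag j, True)] @ Pw n j
          \<and> last du \<noteq> (Bg j, True)
        \<longrightarrow> z \<in> {(Ag j, False), (Bg j, False)} \<union> pm (ABs (Suc j) g))
  \<and> (\<forall>j. 1 \<le> j \<and> j \<le> g \<and> w' = (Ag j, True) # Pw n j \<and> last du \<noteq> (Bg j, True)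
        \<longrightarrow> z \<in> pm (Ms 1 n \<union> ABs 1 (j - 1)) \<union> {(Ag j, True)} \<union> pm {Bg j})
  \<and> (\<forall>j. 1 \<le> j \<and> j \<le> g \<and> w' = [(Ag j, False), (Bg j, False), (Ag j, True)] @ Pw n j
          \<and> last du \<noteq> (Bg j, False)
        \<longrightarrow> z \<in> pm (Ms 1 n \<union> ABs 1 (j - 1)) \<union> {(Bg j, True)})
  \<and> (\<forall>j. 1 \<le> j \<and> j \<le> g \<and> w' = P'w n j \<and> last du \<noteq> (Bg j, False)
        \<longrightarrow> z \<in> pm (ABs (Suc j) g))"
proof -
  have inv: "spine_form n (last du) (w @ [z] @ w')"
    using spine_form_dual_eval[OF du_valid du_red du_ne] form by simp
  have red: "reduced (w @ [z] @ w')"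
    using form unfolding dual_eval_def by (metis reduced_reduce)
  have zv: "valid_gen n g (fst z)"
    using valid_dual_eval[OF du_valid] form by simp
  show ?thesis
    by (intro conjI allI impI; elim conjE;
        rule lemma3p3_i[OF inv zv] lemma3p3_ii[OF inv zv] lemma3p3_iii[OF inv zv]
          lemma3p3_iv[OF inv zv] lemma3p3_v[OF inv zv] lemma3p3_vi[OF inv red zv]
          lemma3p3_vii[OF inv zv] lemma3p3_viii[OF inv red zv] lemma3p3_ix[OF inv red zv]
          lemma3p3_x[OF inv zv];
        assumption)
qed

end
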